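(* There exists an anonymous hedonic game with $n=7$ agents having strict and generally single-peaked preferences such that there is an infinite sequence of IS deviations starting from the singleton partition, and there is also an infinite sequence of IS deviations starting from the grand coalition $\{N\}$.
   Context: A hedonic game on agent set $N=[n]$ assigns to each agent $i$ a weak order $\succsim_i$ over coalitions containing $i$. In an anonymous hedonic game (AHG), each agent $i$ has a weak order $\succsim_i^S$ over sizes $\{1,\dots,n\}$ and coalitions are compared only via their sizes. Preferences are strict if these orders are linear. An AHG is generally single-peaked if there is a linear order $>$ on $[n]$ such that for every agent $i$ and all $x,y,z$ with $x>y>z$ or $z>y>x$, $x\succ_i^S y$ implies $y\succsim_i^S z$. The singleton partition is $\{\{i\}:i\in N\}$. An IS deviation of agent $i$ from partition $\pi$ to $\pi'$ is a move of $i$ alone from $\pi(i)$ into another coalition of $\pi$ or into a new singleton such that $\pi'(i)\succ_i\pi(i)$ and $\pi'(j)\succsim_j\pi(j)$ for every $j\in\pi'(i)\setminus\{i\}$. *)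

theory Defs
  imports Main "HOL-Library.Disjoint_Sets"
begin

text \<open>An anonymous hedonic game is given by, for each agent i,
  a relation R i on sizes {1..n}; (x, y) \<in> R i means that agent i weakly prefers
  coalitions of size x to coalitions of size y.\<close>

definition agents :: "nat \<Rightarrow> nat set" where
  "agents n = {1..n}"

definition strict_AHG :: "nat \<Rightarrow> (nat \<Rightarrow> (nat \<times> nat) set) \<Rightarrow> bool" where
  "strict_AHG n R \<longleftrightarrow> (\<forall>i\<in>agents n. linear_order_on {1..n} (R i))"

definition size_weak :: "(nat \<Rightarrow> (nat \<times> nat) set) \<Rightarrow> nat \<Rightarrow> nat \<Rightarrow> nat \<Rightarrow> bool" where
  "size_weak R i x y \<longleftrightarrow> (x, y) \<in> R i"

definition size_strict :: "(nat \<Rightarrow> (nat \<times> nat) set) \<Rightarrow> nat \<Rightarrow> nat \<Rightarrow> nat \<Rightarrow> bool" where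
  "size_strict R i x y \<longleftrightarrow> (x, y) \<in> R i \<and> (y, x) \<notin> R i"

text \<open>Generally single-peaked: there is a linear order L on {1..n} (where (a,b) \<in> L reads
  a \<le>_L b) such that whenever y lies strictly between x and z in L, x \<succ>_i y implies
  y \<succeq>_i z.\<close>
definition gen_single_peaked :: "nat \<Rightarrow> (nat \<Rightarrow> (nat \<times> nat) set) \<Rightarrow> bool" where
  "gen_single_peaked n R \<longleftrightarrow>
     (\<exists>L. linear_order_on {1..n} L \<and>
        (\<forall>i\<in>agents n. \<forall>x\<in>{1..n}. \<forall>y\<in>{1..n}. \<forall>z\<in>{1..n}.
           (((y, x) \<in> L \<and> y \<noteq> x \<and> (z, y) \<in> L \<and> z \<noteq> y) \<or>
            ((x, y) \<in> L \<and> x \<noteq> y \<and> (y, z) \<in> L \<and> y \<noteq> z)) \<longrightarrow>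
           size_strict R i x y \<longrightarrow> size_weak R i y z))"

definition coalition_of :: "nat set set \<Rightarrow> nat \<Rightarrow> nat set" where
  "coalition_of \<pi> i = (THE S. S \<in> \<pi> \<and> i \<in> S)"

definition coal_weak :: "(nat \<Rightarrow> (nat \<times> nat) set) \<Rightarrow> nat \<Rightarrow> nat set \<Rightarrow> nat set \<Rightarrow> bool" where
  "coal_weak R i S T \<longleftrightarrow> size_weak R i (card S) (card T)"

definition coal_strict :: "(nat \<Rightarrow> (nat \<times> nat) set) \<Rightarrow> nat \<Rightarrow> nat set \<Rightarrow> nat set \<Rightarrow> bool" where
  "coal_strict R i S T \<longleftrightarrow> size_strict R i (card S) (card T)"

text \<open>IS deviation from partition \<pi> to \<pi>': some agent i leaves its coalition and joins
  another coalition T of \<pi> or a new singleton (T = {}); i strictly improves and every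
  member of T weakly improves.\<close>
definition IS_deviation :: "nat \<Rightarrow> (nat \<Rightarrow> (nat \<times> nat) set) \<Rightarrow> nat set set \<Rightarrow> nat set set \<Rightarrow> bool" where
  "IS_deviation n R \<pi> \<pi>' \<longleftrightarrow>
     partition_on (agents n) \<pi> \<and>
     (\<exists>i\<in>agents n. \<exists>T\<in>insert {} \<pi>. i \<notin> T \<and>
        \<pi>' = ((\<pi> - {coalition_of \<pi> i, T}) \<union> {coalition_of \<pi> i - {i}, insert i T}) - {{}} \<and>
        coal_strict R i (insert i T) (coalition_of \<pi> i) \<and>
        (\<forall>j\<in>T. coal_weak R j (insert i T) T))"

definition singleton_partition :: "nat \<Rightarrow> nat set set" where
  "singleton_partition n = (\<lambda>i. {i}) ` agents n"

definition grand_coalition :: "nat \<Rightarrow> nat set set" where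
  "grand_coalition n = {agents n}"

end

theory Submission
  imports Defs
begin

text \<open>The six partitions
  12345|67, 167|2345, 167|2|345, 12|345|67, 1|267|345, 1345|267
  form a cycle of IS deviations in the game below. It is reached from the singleton partition
  by agents 7, 3, 4, 1, 2 joining coalitions one after another, and from the grand coalition by
  agent 6 leaving and agent 7 following it. A finite run ending in a cycle unrolls to an infinite
  one. Single-peakedness is with respect to the axis 1, 2, 3, 5, 4, 6, 7; it only has to be
  checked on triples of sizes in axis order.\<close>

definition has_infinite_run :: "('a \<Rightarrow> 'a \<Rightarrow> bool) \<Rightarrow> 'a \<Rightarrow> bool" where
  "has_infinite_run P x \<longleftrightarrow> (\<exists>seq. seq 0 = x \<and> (\<forall>k. P (seq k) (seq (Suc k))))"

lemma has_infinite_run_step: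
  assumes "P x y" "has_infinite_run P y"
  shows "has_infinite_run P x"
proof -
  obtain seq where "seq 0 = y" "\<forall>k. P (seq k) (seq (Suc k))"
    using assms(2) unfolding has_infinite_run_def by blast
  then have "\<forall>k. P (case_nat x seq k) (case_nat x seq (Suc k))"
    using assms(1) by (auto split: nat.split)
  then show ?thesis
    unfolding has_infinite_run_def by (intro exI[of _ "case_nat x seq"]) simp
qed

lemma has_infinite_run_path:
  "successively P xs \<Longrightarrow> xs \<noteq> [] \<Longrightarrow> has_infinite_run P (last xs) \<Longrightarrow>
    has_infinite_run P (hd xs)"
  by (induction P xs rule: successively.induct) (auto intro: has_infinite_run_step)

lemma has_infinite_run_cycle:
  assumes path: "successively P xs" and "2 \<le> length xs" and closed: "last xs = hd xs"
  shows "has_infinite_run P (hd xs)"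
proof -
  define l where "l = length xs - 1"
  have "0 < l" "length xs = Suc l"
    using \<open>2 \<le> length xs\<close> by (simp_all add: l_def)
  have wrap: "xs ! Suc (k mod l) = xs ! (Suc k mod l)" for k
  proof (cases "Suc (k mod l) = l")
    case True
    then have "Suc k mod l = 0" by (simp add: mod_Suc)
    with True closed \<open>length xs = Suc l\<close> show ?thesis
      by (metis diff_Suc_1 hd_conv_nth last_conv_nth list.size(3) nat.distinct(1))
  qed (simp add: mod_Suc)
  have "P (xs ! (k mod l)) (xs ! (Suc k mod l))" for k
    using successively_nth[OF path, of "k mod l"] wrap[of k] \<open>0 < l\<close> \<open>length xs = Suc l\<close>
    by simp
  moreover have "xs ! (0 mod l) = hd xs"
    using \<open>length xs = Suc l\<close> by (cases xs) simp_all
  ultimately show ?thesis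
    unfolding has_infinite_run_def by (intro exI[of _ "\<lambda>k. xs ! (k mod l)"]) simp
qed

definition rank :: "'a list \<Rightarrow> 'a \<Rightarrow> nat" where
  "rank xs x = length (takeWhile (\<lambda>y. y \<noteq> x) xs)"

lemma nth_rank: "x \<in> set xs \<Longrightarrow> xs ! rank xs x = x"
  by (induction xs) (auto simp: rank_def)

lemma rank_less_length: "x \<in> set xs \<Longrightarrow> rank xs x < length xs"
  by (induction xs) (auto simp: rank_def)

definition list_order :: "'a list \<Rightarrow> ('a \<times> 'a) set" where
  "list_order xs = {(x, y). x \<in> set xs \<and> y \<in> set xs \<and> rank xs x \<le> rank xs y}"

lemma mem_list_order_iff:
  "(x, y) \<in> list_order xs \<longleftrightarrow> x \<in> set xs \<and> y \<in> set xs \<and> rank xs x \<le> rank xs y"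
  by (simp add: list_order_def)

lemma linear_order_on_list_order: "linear_order_on (set xs) (list_order xs)"
proof -
  have "inj_on (rank xs) (set xs)"
    by (metis inj_onI nth_rank)
  then show ?thesis
    unfolding list_order_def linear_order_on_def partial_order_on_def preorder_on_def
      refl_on_def trans_def antisym_def total_on_def inj_on_def
    by auto
qed

lemma gen_single_peakedI:
  assumes axis: "set ax = {1..n}" "distinct ax"
    and no_valley: "\<And>a b c i. a < b \<Longrightarrow> b < c \<Longrightarrow> c < length ax \<Longrightarrow> i \<in> agents n \<Longrightarrow>
      (size_strict R i (ax ! a) (ax ! b) \<longrightarrow> size_weak R i (ax ! b) (ax ! c)) \<and>
      (size_strict R i (ax ! c) (ax ! b) \<longrightarrow> size_weak R i (ax ! b) (ax ! a))"
  shows "gen_single_peaked n R"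
  unfolding gen_single_peaked_def
proof (intro exI conjI ballI impI)
  show "linear_order_on {1..n} (list_order ax)"
    using linear_order_on_list_order axis by metis
  have before_iff: "(x, y) \<in> list_order ax \<and> x \<noteq> y \<longleftrightarrow> rank ax x < rank ax y"
    if "x \<in> set ax" "y \<in> set ax" for x y
    using that nth_rank[of x ax] nth_rank[of y ax] by (auto simp: mem_list_order_iff order_less_le)
  fix i x y z
  assume i: "i \<in> agents n" and "x \<in> {1..n}" "y \<in> {1..n}" "z \<in> {1..n}"
    and between: "(y, x) \<in> list_order ax \<and> y \<noteq> x \<and> (z, y) \<in> list_order ax \<and> z \<noteq> y \<or>
      (x, y) \<in> list_order ax \<and> x \<noteq> y \<and> (y, z) \<in> list_order ax \<and> y \<noteq> z"
    and strict: "size_strict R i x y"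
  then have "x \<in> set ax" "y \<in> set ax" "z \<in> set ax"
    using axis(1) by simp_all
  then have at_rank: "ax ! rank ax x = x" "ax ! rank ax y = y" "ax ! rank ax z = z"
    and "rank ax x < length ax" "rank ax z < length ax"
    by (simp_all add: nth_rank rank_less_length)
  from between consider "rank ax z < rank ax y" "rank ax y < rank ax x"
    | "rank ax x < rank ax y" "rank ax y < rank ax z"
    using before_iff \<open>x \<in> set ax\<close> \<open>y \<in> set ax\<close> \<open>z \<in> set ax\<close> by blast
  then show "size_weak R i y z"
  proof cases
    case 1
    then show ?thesis
      using no_valley[of "rank ax z" "rank ax y" "rank ax x" i] i strict at_rank
        \<open>rank ax x < length ax\<close> by simp
  next
    case 2
    then show ?thesis
      using no_valley[of "rank ax x" "rank ax y" "rank ax z" i] i strict at_rank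
        \<open>rank ax z < length ax\<close> by simp
  qed
qed

lemma coalition_of_eq:
  assumes "partition_on A \<pi>" "S \<in> \<pi>" "i \<in> S"
  shows "coalition_of \<pi> i = S"
  unfolding coalition_of_def
proof (rule the_equality)
  fix S' assume "S' \<in> \<pi> \<and> i \<in> S'"
  then show "S' = S"
    using assms disjointD[OF partition_onD2[OF assms(1)]] by blast
qed (use assms in blast)

lemma bex_coalition_of_iff:
  assumes "partition_on A \<pi>"
  shows "(\<exists>i\<in>A. P i (coalition_of \<pi> i)) \<longleftrightarrow> (\<exists>S\<in>\<pi>. \<exists>i\<in>S. P i S)"
proof
  assume "\<exists>i\<in>A. P i (coalition_of \<pi> i)"
  then obtain i where "i \<in> A" "P i (coalition_of \<pi> i)" by blast
  moreover obtain S where "S \<in> \<pi>" "i \<in> S"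
    using \<open>i \<in> A\<close> partition_onD1[OF assms] by blast
  ultimately show "\<exists>S\<in>\<pi>. \<exists>i\<in>S. P i S"
    using coalition_of_eq[OF assms] by auto
next
  assume "\<exists>S\<in>\<pi>. \<exists>i\<in>S. P i S"
  then show "\<exists>i\<in>A. P i (coalition_of \<pi> i)"
    using coalition_of_eq[OF assms] partition_onD1[OF assms] by blast
qed

lemma IS_deviation_iff:
  "IS_deviation n R \<pi> \<pi>' \<longleftrightarrow> partition_on (agents n) \<pi> \<and>
     (\<exists>S\<in>\<pi>. \<exists>i\<in>S. \<exists>T\<in>insert {} \<pi>. i \<notin> T \<and>
        \<pi>' = ((\<pi> - {S, T}) \<union> {S - {i}, insert i T}) - {{}} \<and>
        coal_strict R i (insert i T) S \<and> (\<forall>j\<in>T. coal_weak R j (insert i T) T))"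
  unfolding IS_deviation_def
  by (rule conj_cong[OF refl], erule bex_coalition_of_iff)

text \<open>Agent i ranks the coalition sizes in the order of the list profile ! (i - 1),
  most preferred first.\<close>

definition profile :: "nat list list" where
  "profile = [[2, 3, 5, 4, 6, 7, 1], [5, 3, 2, 1, 4, 6, 7], [5, 4, 6, 3, 2, 7, 1],
    [5, 4, 3, 6, 2, 1, 7], [5, 4, 6, 3, 7, 2, 1], [3, 2, 5, 4, 1, 6, 7], [5, 3, 4, 2, 1, 6, 7]]"

definition game :: "nat \<Rightarrow> (nat \<times> nat) set" where
  "game i = list_order (profile ! (i - 1))"

definition axis :: "nat list" where
  "axis = [1, 2, 3, 5, 4, 6, 7]"

lemma strict_AHG_game: "strict_AHG 7 game"
proof -
  have "\<forall>i\<in>agents 7. set (profile ! (i - 1)) = {1..7}"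
    unfolding agents_def profile_def by code_simp
  then show ?thesis
    unfolding strict_AHG_def game_def by (metis linear_order_on_list_order)
qed

lemma gen_single_peaked_game: "gen_single_peaked 7 game"
proof (rule gen_single_peakedI)
  show "set axis = {1..7}" "distinct axis"
    unfolding axis_def by code_simp+
  have "\<forall>c\<in>set [0..<7]. \<forall>b\<in>set [0..<c]. \<forall>a\<in>set [0..<b]. \<forall>i\<in>agents 7.
    (size_strict game i (axis ! a) (axis ! b) \<longrightarrow> size_weak game i (axis ! b) (axis ! c)) \<and>
    (size_strict game i (axis ! c) (axis ! b) \<longrightarrow> size_weak game i (axis ! b) (axis ! a))"
    unfolding size_strict_def size_weak_def game_def mem_list_order_iff agents_def
    by code_simp
  moreover have "length axis = 7"
    by (simp add: axis_def)
  ultimately show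
    "(size_strict game i (axis ! a) (axis ! b) \<longrightarrow> size_weak game i (axis ! b) (axis ! c)) \<and>
     (size_strict game i (axis ! c) (axis ! b) \<longrightarrow> size_weak game i (axis ! b) (axis ! a))"
    if "a < b" "b < c" "c < length axis" "i \<in> agents 7" for a b c i
    using that by simp
qed

lemma IS_cycle:
  "successively (IS_deviation 7 game)
    [{{1,2,3,4,5}, {6,7}}, {{1,6,7}, {2,3,4,5}}, {{1,6,7}, {2}, {3,4,5}},
     {{1,2}, {3,4,5}, {6,7}}, {{1}, {2,6,7}, {3,4,5}}, {{1,3,4,5}, {2,6,7}},
     {{1,2,3,4,5}, {6,7}}]"
  unfolding IS_deviation_iff coal_strict_def coal_weak_def size_strict_def size_weak_def
    game_def mem_list_order_iff profile_def
  by code_simp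

lemma IS_path_from_singletons:
  "successively (IS_deviation 7 game)
    [singleton_partition 7, {{1}, {2}, {3}, {4}, {5}, {6,7}}, {{1}, {2}, {3,5}, {4}, {6,7}},
     {{1}, {2}, {3,4,5}, {6,7}}, {{1,3,4,5}, {2}, {6,7}}, {{1,2,3,4,5}, {6,7}}]"
  unfolding IS_deviation_iff coal_strict_def coal_weak_def size_strict_def size_weak_def
    game_def mem_list_order_iff profile_def singleton_partition_def agents_def
  by code_simp

lemma IS_path_from_grand_coalition:
  "successively (IS_deviation 7 game)
    [grand_coalition 7, {{1,2,3,4,5,7}, {6}}, {{1,2,3,4,5}, {6,7}}]"
  unfolding IS_deviation_iff coal_strict_def coal_weak_def size_strict_def size_weak_def
    game_def mem_list_order_iff profile_def grand_coalition_def agents_def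
  by code_simp

theorem proposition3p2:
  shows "\<exists>R. strict_AHG 7 R \<and> gen_single_peaked 7 R \<and>
    (\<exists>seq :: nat \<Rightarrow> nat set set. seq 0 = singleton_partition 7 \<and>
        (\<forall>k. IS_deviation 7 R (seq k) (seq (Suc k)))) \<and>
    (\<exists>seq :: nat \<Rightarrow> nat set set. seq 0 = grand_coalition 7 \<and>
        (\<forall>k. IS_deviation 7 R (seq k) (seq (Suc k))))"
proof -
  have cycle: "has_infinite_run (IS_deviation 7 game) {{1,2,3,4,5}, {6,7}}"
    using has_infinite_run_cycle[OF IS_cycle] by simp
  have "has_infinite_run (IS_deviation 7 game) (singleton_partition 7)"
    using has_infinite_run_path[OF IS_path_from_singletons] cycle by simp
  moreover have "has_infinite_run (IS_deviation 7 game) (grand_coalition 7)"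
    using has_infinite_run_path[OF IS_path_from_grand_coalition] cycle by simp
  ultimately show ?thesis
    using strict_AHG_game gen_single_peaked_game unfolding has_infinite_run_def by blast
qed

end
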